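(* Let $n\ge 2$, let $P\neq[n,n-1,\ldots,1]$ be an arithmetically progressed permutation of length $n$ with ratio $k$, and let $\mathsf{T}_P$ be its associated ternary string. Then the matrix-based BWT of $\mathsf{T}_P$ coincides with the suffix-array-based BWT of $\mathsf{T}_P$.
   Context: Alphabet $\{\mathtt{a}<\mathtt{b}<\mathtt{c}\}$, lexicographic order $\prec$ with a proper prefix smaller than the longer string; suffix array $\mathsf{SA}_{\mathsf{T}}$: permutation of $[1..n]$ such that $\mathsf{T}[\mathsf{SA}_{\mathsf{T}}[i]..n]$ is the $i$-th smallest suffix. $x\bmod n$ denotes the representative of $x$ modulo $n$ in $[1..n]$. An arithmetically progressed permutation of length $n$ with ratio $k\in[1..n-1]$ is a permutation $P=[p_1,\ldots,p_n]$ of $[1..n]$ with $p_{i+1}=p_i+k\bmod n$. Ternary string associated with $P$: cut $P$ immediately after the entry $n-k$ and immediately after the entry $(p_1-k-1)\bmod n$, giving consecutive possibly empty blocks $A,B,C$ with $P=ABC$; set $\mathsf{T}_P[p_i]=\mathtt{a},\mathtt{b},\mathtt{c}$ according as $p_i$ lies in $A$, $B$, $C$. Suffix-array-based BWT: $\mathsf{BWT}_{\mathsf{T}}[i]=\mathsf{T}[\mathsf{SA}_{\mathsf{T}}[i]-1\bmod n]$. Matrix-based BWT: sort the $n$ cyclic rotations $\mathsf{T}[j..n]\mathsf{T}[1..j-1]$ lexicographically and read, top to bottom, the last character of each sorted rotation. *)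

theory Defs
  imports Main "HOL-Library.List_Lexorder"
begin

datatype tern = TA | TB | TC

fun tern_rank :: "tern \<Rightarrow> nat" where
  "tern_rank TA = 0" | "tern_rank TB = 1" | "tern_rank TC = 2"

instantiation tern :: linorder
begin
definition less_eq_tern_def: "(x::tern) \<le> y \<longleftrightarrow> tern_rank x \<le> tern_rank y"
definition less_tern_def: "(x::tern) < y \<longleftrightarrow> tern_rank x < tern_rank y"
instance
proof
  fix x y z :: tern
  show "x < y \<longleftrightarrow> x \<le> y \<and> \<not> y \<le> x" by (auto simp: less_eq_tern_def less_tern_def)
  show "x \<le> x" by (simp add: less_eq_tern_def)
  show "x \<le> y \<Longrightarrow> y \<le> z \<Longrightarrow> x \<le> z" by (simp add: less_eq_tern_def)
  show "x \<le> y \<Longrightarrow> y \<le> x \<Longrightarrow> x = y"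
    by (cases x; cases y) (simp_all add: less_eq_tern_def)
  show "x \<le> y \<or> y \<le> x" by (auto simp: less_eq_tern_def)
qed
end

text \<open>x mod n with representative in [1..n].\<close>
definition modn :: "int \<Rightarrow> nat \<Rightarrow> nat" where
  "modn x n = nat ((x - 1) mod int n) + 1"

text \<open>Strings are lists, 1-indexed in the paper: T[i] = T ! (i-1).
  Suffix T[i..n] and rotation T[j..n]T[1..j-1].\<close>
definition suffix_at :: "'a list \<Rightarrow> nat \<Rightarrow> 'a list" where
  "suffix_at T i = drop (i - 1) T"

definition rotation_at :: "'a list \<Rightarrow> nat \<Rightarrow> 'a list" where
  "rotation_at T j = drop (j - 1) T @ take (j - 1) T"

definition is_suffix_array :: "'a::linorder list \<Rightarrow> nat list \<Rightarrow> bool" where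
  "is_suffix_array T SA \<longleftrightarrow> length SA = length T \<and> distinct SA \<and>
     set SA = {1..length T} \<and>
     (\<forall>i j. i < j \<and> j < length SA \<longrightarrow> suffix_at T (SA ! i) < suffix_at T (SA ! j))"

definition bwt_sa :: "'a list \<Rightarrow> nat list \<Rightarrow> 'a list" where
  "bwt_sa T SA = map (\<lambda>s. T ! (modn (int s - 1) (length T) - 1)) SA"

definition bwt_matrix :: "'a::linorder list \<Rightarrow> 'a list" where
  "bwt_matrix T = map last (sort (map (rotation_at T) [1..<length T + 1]))"

definition arith_prog_perm :: "nat \<Rightarrow> nat \<Rightarrow> nat list \<Rightarrow> bool" where
  "arith_prog_perm n k P \<longleftrightarrow> length P = n \<and> distinct P \<and> set P = {1..n} \<and>
     1 \<le> k \<and> k \<le> n - 1 \<and>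
     (\<forall>i. i + 1 < n \<longrightarrow> P ! (i + 1) = modn (int (P ! i) + int k) n)"

definition cut_after :: "nat list \<Rightarrow> nat \<Rightarrow> nat" where
  "cut_after P v = Suc (THE i. i < length P \<and> P ! i = v)"

definition ternary_string :: "nat \<Rightarrow> nat \<Rightarrow> nat list \<Rightarrow> tern list" where
  "ternary_string n k P =
     (let c1 = cut_after P (n - k);
          c2 = cut_after P (modn (int (P ! 0) - int k - 1) n);
          lo = min c1 c2; hi = max c1 c2;
          A = take lo P; B = drop lo (take hi P)
      in map (\<lambda>v. if v \<in> set A then TA else if v \<in> set B then TB else TC) [1..<n + 1])"

end

theory Submission
  imports Defs "HOL-Library.Multiset"
begin

(* Rank the text positions v by pos v, the index of v in P. The letter at v depends only on
   the block of P containing v, so letters are non-decreasing in rank. Adding 1 modulo n is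
   the same as adding m*k, where m is the index of p_1 + 1 in P; hence one cyclic step to the
   right in the text adds m to the rank modulo n. The cut after (p_1-k-1) mod n lies exactly
   at n - m, so inside a block of equal letters this step preserves the rank order.
   Reading two rotations in parallel, the rank order therefore persists along their common
   prefix and the first differing letters are ordered like the ranks: the sorted rotations
   are the rotations in rank order. The same holds for suffixes, since the cut after n - k
   makes position n the first of its letter block, so of two suffixes that agree until the
   text ends, the shorter one has the smaller rank. The suffix array thus lists the positions
   in rank order, and both transforms read the same letters. *)

lemma int_modn: "n > 0 \<Longrightarrow> int (modn x n) = (x - 1) mod int n + 1"
  unfolding modn_def by simp

lemma modn_mem: "n > 0 \<Longrightarrow> modn x n \<in> {1..n}"
  unfolding modn_def by (simp add: nat_less_iff Suc_leI)

lemma modn_of_mem: "v \<in> {1..n} \<Longrightarrow> modn (int v) n = v"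
  unfolding modn_def by auto

lemma modn_eq_iff: "n > 0 \<Longrightarrow> modn x n = modn y n \<longleftrightarrow> x mod int n = y mod int n"
proof -
  assume n: "n > 0"
  have "modn x n = modn y n \<longleftrightarrow> (x - 1) mod int n = (y - 1) mod int n"
    using int_modn[OF n, of x] int_modn[OF n, of y] by (metis add_right_cancel of_nat_eq_iff)
  also have "\<dots> \<longleftrightarrow> x mod int n = y mod int n"
    by (simp add: mod_eq_dvd_iff)
  finally show ?thesis .
qed

lemma modn_add: "n > 0 \<Longrightarrow> modn (int (modn x n) + y) n = modn (x + y) n"
proof -
  assume n: "n > 0"
  have "((x - 1) mod int n + 1 + y) mod int n = (x - 1 + 1 + y) mod int n"
    by (metis mod_add_left_eq)
  then show ?thesis using n by (simp add: modn_eq_iff int_modn)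
qed

lemma modn_add_mod: "n > 0 \<Longrightarrow> modn (x + int (i mod n) * y) n = modn (x + int i * y) n"
proof -
  assume n: "n > 0"
  have "(x + int (i mod n) * y) mod int n = (x + (int i mod int n) * y) mod int n"
    by (simp add: zmod_int)
  also have "\<dots> = (x + int i * y) mod int n"
    by (metis mod_add_right_eq mod_mult_left_eq)
  finally show ?thesis using n by (simp add: modn_eq_iff)
qed

lemma modn_plus_one: "v \<in> {1..n} \<Longrightarrow> modn (int v + 1) n = v mod n + 1"
  unfolding modn_def by (auto simp: nat_mod_as_int)

lemma mod_add_strict_mono:
  fixes a b m n :: nat
  assumes "a < b" "b < n" "m < n" "\<not> (a < n - m \<and> n - m \<le> b)"
  shows "(a + m) mod n < (b + m) mod n"
proof (cases "b + m < n")
  case False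
  then have "n \<le> a + m" using assms by linarith
  then have "(a + m) mod n = a + m - n" "(b + m) mod n = b + m - n"
    using assms by (simp_all add: mod_if)
  then show ?thesis using assms \<open>n \<le> a + m\<close> by linarith
qed (use assms in simp)

lemma le_list_nthI:
  fixes xs ys :: "'a::linorder list"
  assumes "length xs = length ys"
    and "\<And>t. t < length xs \<Longrightarrow> (\<forall>s<t. xs ! s = ys ! s) \<Longrightarrow> xs ! t \<le> ys ! t"
  shows "xs \<le> ys"
  using assms
proof (induction xs arbitrary: ys)
  case (Cons x xs)
  then obtain y ys' where ys: "ys = y # ys'" by (cases ys) auto
  have "x \<le> y" using Cons.prems(2)[of 0] ys by simp
  moreover have "xs \<le> ys'" if "x = y"
  proof (rule Cons.IH)
    show "length xs = length ys'" using Cons.prems(1) ys by simp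
    fix t assume t: "t < length xs" and "\<forall>s<t. xs ! s = ys' ! s"
    then have "\<forall>s<Suc t. (x # xs) ! s = ys ! s"
      using ys \<open>x = y\<close> by (auto simp: less_Suc_eq_0_disj)
    then show "xs ! t \<le> ys' ! t"
      using Cons.prems(2)[of "Suc t"] ys t by simp
  qed
  ultimately show ?case using ys by auto
qed simp

lemma nth_rotation_at:
  assumes "length T = n" "v \<in> {1..n}" "t < n"
  shows "rotation_at T v ! t = T ! (modn (int v + int t) n - 1)"
proof -
  have "int v + int t - 1 = int (v - 1 + t)" using assms(2) by auto
  then have eq: "modn (int v + int t) n - 1 = (v - 1 + t) mod n"
    unfolding modn_def by (metis add_diff_cancel_right' nat_int zmod_int)
  show ?thesis
    unfolding eq rotation_at_def using assms by (auto simp: nth_append mod_if add.commute)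
qed

lemma last_rotation_at:
  assumes "s \<in> {1..length T}"
  shows "last (rotation_at T s) = T ! (modn (int s - 1) (length T) - 1)"
proof (cases "s = 1")
  case True
  have "length T > 0" using assms by auto
  then have "nat (- 1 mod int (length T)) = length T - 1"
    by (simp add: zmod_minus1 nat_diff_distrib)
  then show ?thesis
    using \<open>length T > 0\<close> True by (simp add: rotation_at_def modn_def last_conv_nth)
next
  case False
  then have "modn (int s - 1) (length T) = s - 1"
    using assms unfolding modn_def by auto
  moreover have "last (rotation_at T s) = T ! (s - 2)"
  proof -
    have "take (s - 1) T \<noteq> []" "s - 2 < s - 1" "s - 1 < length T"
      using False assms by auto
    then show ?thesis
      by (simp add: rotation_at_def last_append last_conv_nth min_def nth_take numeral_2_eq_2)
  qed
  ultimately show ?thesis by (simp add: numeral_2_eq_2)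
qed

lemma bwt_matrix_eq_bwt_sa_if_sorted:
  assumes sa: "is_suffix_array T SA" and sorted: "sorted (map (rotation_at T) SA)"
  shows "bwt_matrix T = bwt_sa T SA"
proof -
  have set_SA: "set SA = {1..length T}" and "distinct SA"
    using sa unfolding is_suffix_array_def by auto
  moreover have "set [1..<length T + 1] = {1..length T}" by auto
  ultimately have "mset SA = mset [1..<length T + 1]"
    by (metis distinct_upt set_eq_iff_mset_eq_distinct)
  then have "sort (map (rotation_at T) [1..<length T + 1]) = map (rotation_at T) SA"
    using properties_for_sort sorted by (metis mset_map)
  then have "bwt_matrix T = map (\<lambda>s. last (rotation_at T s)) SA"
    unfolding bwt_matrix_def by simp
  also have "\<dots> = bwt_sa T SA"
    unfolding bwt_sa_def by (rule map_cong[OF refl]) (use set_SA last_rotation_at in blast)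
  finally show ?thesis .
qed

lemma suffix_at_Cons:
  "v \<in> {1..length T} \<Longrightarrow> suffix_at T v = T ! (v - 1) # suffix_at T (v + 1)"
  unfolding suffix_at_def using Cons_nth_drop_Suc[of "v - 1" T] by auto

locale rank_shift =
  fixes T :: "'a::linorder list" and n m :: nat
    and rank :: "nat \<Rightarrow> nat" and letter :: "nat \<Rightarrow> 'a"
  assumes length_T: "length T = n"
    and m_less: "m < n"
    and rank_less: "\<And>v. v \<in> {1..n} \<Longrightarrow> rank v < n"
    and inj_rank: "inj_on rank {1..n}"
    and nth_T: "\<And>v. v \<in> {1..n} \<Longrightarrow> T ! (v - 1) = letter (rank v)"
    and mono_letter: "mono letter"
    and rank_succ: "\<And>v. v \<in> {1..n} \<Longrightarrow> rank (modn (int v + 1) n) = (rank v + m) mod n"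
    and block_boundary:
      "\<And>i j. i < j \<Longrightarrow> j < n \<Longrightarrow> letter i = letter j \<Longrightarrow> \<not> (i < n - m \<and> n - m \<le> j)"
    and rank_last_first_in_block: "\<And>i. i < rank n \<Longrightarrow> letter i \<noteq> letter (rank n)"
begin

lemma n_pos: "n > 0"
  using m_less by simp

lemma rank_succ_less:
  assumes "v \<in> {1..n}" "w \<in> {1..n}" "rank v < rank w" "letter (rank v) = letter (rank w)"
  shows "rank (modn (int v + 1) n) < rank (modn (int w + 1) n)"
  using mod_add_strict_mono[of "rank v" "rank w" n m] assms rank_less block_boundary m_less rank_succ
  by auto

lemma rank_shift_less:
  assumes v: "v \<in> {1..n}" and w: "w \<in> {1..n}" and "rank v < rank w"
    and "\<forall>s<t. letter (rank (modn (int v + int s) n)) = letter (rank (modn (int w + int s) n))"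
  shows "rank (modn (int v + int t) n) < rank (modn (int w + int t) n)"
  using assms(4)
proof (induction t)
  case 0
  then show ?case using assms by (simp add: modn_of_mem)
next
  case (Suc t)
  have shift: "modn (int u + int (Suc t)) n = modn (int (modn (int u + int t) n) + 1) n" for u
    using modn_add[OF n_pos, of "int u + int t" 1] by (simp add: algebra_simps)
  show ?case
    unfolding shift using rank_succ_less[OF modn_mem[OF n_pos] modn_mem[OF n_pos]] Suc by auto
qed

lemma rotation_le_if_rank_less:
  assumes v: "v \<in> {1..n}" and w: "w \<in> {1..n}" and "rank v < rank w"
  shows "rotation_at T v \<le> rotation_at T w"
proof (rule le_list_nthI)
  show "length (rotation_at T v) = length (rotation_at T w)"
    by (simp add: rotation_at_def)
  fix t assume "t < length (rotation_at T v)"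
    and common: "\<forall>s<t. rotation_at T v ! s = rotation_at T w ! s"
  then have t: "t < n" by (simp add: rotation_at_def length_T)
  note nth_rot = nth_rotation_at[OF length_T v] nth_rotation_at[OF length_T w]
    and nth_T' = nth_T[OF modn_mem[OF n_pos]]
  have "\<forall>s<t. letter (rank (modn (int v + int s) n)) = letter (rank (modn (int w + int s) n))"
    using common t nth_rot nth_T' by auto
  then have "rank (modn (int v + int t) n) < rank (modn (int w + int t) n)"
    using rank_shift_less assms by blast
  then show "rotation_at T v ! t \<le> rotation_at T w ! t"
    using nth_rot[of t] t nth_T' monoD[OF mono_letter] by simp
qed

lemma suffix_less_if_rank_less:
  "v \<in> {1..n} \<Longrightarrow> w \<in> {1..n} \<Longrightarrow> rank v < rank w \<Longrightarrow> suffix_at T v < suffix_at T w"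
proof (induction "n - v" arbitrary: v w rule: less_induct)
  case less
  note suffix_Cons = suffix_at_Cons[of _ T, unfolded length_T]
  show ?case
  proof (cases "letter (rank v) = letter (rank w)")
    case False
    then have "letter (rank v) < letter (rank w)"
      using monoD[OF mono_letter, of "rank v" "rank w"] less.prems by auto
    then show ?thesis using suffix_Cons less.prems nth_T by simp
  next
    case same_letter: True
    show ?thesis
    proof (cases "v = n")
      case True
      then have "w < n" using less.prems by (cases "w = n") auto
      then have "suffix_at T (w + 1) \<noteq> []" "suffix_at T (v + 1) = []"
        using True length_T by (simp_all add: suffix_at_def)
      then show ?thesis using suffix_Cons less.prems nth_T same_letter
        by (cases "suffix_at T (w + 1)") auto
    next
      case False
      have "w \<noteq> n" using rank_last_first_in_block same_letter less.prems by metis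
      then have succ: "modn (int v + 1) n = v + 1" "modn (int w + 1) n = w + 1"
        using modn_plus_one less.prems False by auto
      then have "rank (v + 1) < rank (w + 1)"
        using rank_succ_less less.prems same_letter by metis
      then have "suffix_at T (v + 1) < suffix_at T (w + 1)"
        using less.hyps[of "v + 1" "w + 1"] less.prems False \<open>w \<noteq> n\<close> by auto
      then show ?thesis using suffix_Cons less.prems nth_T same_letter by simp
    qed
  qed
qed

lemma suffix_array_mem:
  assumes "is_suffix_array T SA" "i < n"
  shows "SA ! i \<in> {1..n}"
  using assms length_T nth_mem unfolding is_suffix_array_def by metis

lemma suffix_array_rank_less:
  assumes sa: "is_suffix_array T SA" and ij: "i < j" "j < n"
  shows "rank (SA ! i) < rank (SA ! j)"
proof (rule ccontr)
  assume "\<not> rank (SA ! i) < rank (SA ! j)"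
  moreover have "SA ! i \<noteq> SA ! j"
    using sa ij length_T nth_eq_iff_index_eq unfolding is_suffix_array_def by fastforce
  then have "rank (SA ! i) \<noteq> rank (SA ! j)"
    using inj_rank suffix_array_mem[OF sa] ij inj_on_contraD by (metis less_trans)
  ultimately have "suffix_at T (SA ! j) < suffix_at T (SA ! i)"
    using suffix_less_if_rank_less suffix_array_mem[OF sa] ij by (metis less_trans linorder_neqE_nat)
  moreover have "suffix_at T (SA ! i) < suffix_at T (SA ! j)"
    using sa ij length_T unfolding is_suffix_array_def by simp
  ultimately show False by simp
qed

lemma sorted_rotations_suffix_array:
  assumes sa: "is_suffix_array T SA"
  shows "sorted (map (rotation_at T) SA)"
proof (unfold sorted_iff_nth_mono_less, intro allI impI)
  fix i j assume ij: "i < j" "j < length (map (rotation_at T) SA)"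
  then have "j < n" using sa length_T unfolding is_suffix_array_def by simp
  then show "map (rotation_at T) SA ! i \<le> map (rotation_at T) SA ! j"
    using rotation_le_if_rank_less suffix_array_mem[OF sa] suffix_array_rank_less[OF sa] ij
    by (simp add: less_trans)
qed

end

lemma nth_mem_drop_take_iff:
  assumes "distinct xs" "i < length xs"
  shows "xs ! i \<in> set (drop l (take h xs)) \<longleftrightarrow> l \<le> i \<and> i < h"
proof
  assume "xs ! i \<in> set (drop l (take h xs))"
  then obtain j where "j < length (drop l (take h xs))" "drop l (take h xs) ! j = xs ! i"
    by (auto simp: in_set_conv_nth)
  moreover have "l + j < h" "l + j < length xs"
    using \<open>j < length (drop l (take h xs))\<close> by auto
  ultimately have "xs ! (l + j) = xs ! i" "l + j < h" "l + j < length xs"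
    by (simp_all add: nth_take)
  then show "l \<le> i \<and> i < h" using assms nth_eq_iff_index_eq by fastforce
next
  assume "l \<le> i \<and> i < h"
  then have "drop l (take h xs) ! (i - l) = xs ! i" "i - l < length (drop l (take h xs))"
    using assms by auto
  then show "xs ! i \<in> set (drop l (take h xs))" by (metis nth_mem)
qed

locale arith_prog =
  fixes n k :: nat and P :: "nat list"
  assumes arith_prog_perm: "arith_prog_perm n k P"
begin

lemma length_P: "length P = n" and distinct_P: "distinct P" and set_P: "set P = {1..n}"
  and k_pos: "1 \<le> k" and k_less: "k \<le> n - 1"
  and nth_P_Suc: "\<And>i. i + 1 < n \<Longrightarrow> P ! (i + 1) = modn (int (P ! i) + int k) n"
  using arith_prog_perm unfolding arith_prog_perm_def by auto

lemma n_pos: "n > 0"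
  using k_pos k_less by linarith

lemma nth_P_mem: "i < n \<Longrightarrow> P ! i \<in> {1..n}"
  using set_P length_P nth_mem by blast

definition pos :: "nat \<Rightarrow> nat" where
  "pos v = (THE i. i < n \<and> P ! i = v)"

lemma pos_less_and_nth: "v \<in> {1..n} \<Longrightarrow> pos v < n \<and> P ! pos v = v"
  unfolding pos_def
  by (rule theI') (use distinct_Ex1[OF distinct_P] set_P length_P in auto)

lemma pos_nth_P: "i < n \<Longrightarrow> pos (P ! i) = i"
  using pos_less_and_nth[OF nth_P_mem] distinct_P length_P nth_eq_iff_index_eq by metis

lemma inj_pos: "inj_on pos {1..n}"
  by (rule inj_onI) (metis pos_less_and_nth)

lemma nth_P: "i < n \<Longrightarrow> P ! i = modn (int (P ! 0) + int i * int k) n"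
proof (induction i)
  case 0
  then show ?case using nth_P_mem[of 0] by (simp add: modn_of_mem)
next
  case (Suc i)
  then have "P ! Suc i = modn (int (modn (int (P ! 0) + int i * int k) n) + int k) n"
    using nth_P_Suc by simp
  then show ?case using modn_add[OF n_pos] by (simp add: algebra_simps)
qed

lemma pos_modn_add_mult_k:
  assumes v: "v \<in> {1..n}"
  shows "pos (modn (int v + int d * int k) n) = (pos v + d) mod n"
proof -
  have v_eq: "modn (int (P ! 0) + int (pos v) * int k) n = v"
    using nth_P[of "pos v"] pos_less_and_nth[OF v] by simp
  have "modn (int v + int d * int k) n
      = modn (int (modn (int (P ! 0) + int (pos v) * int k) n) + int d * int k) n"
    unfolding v_eq ..
  also have "\<dots> = modn (int (P ! 0) + int (pos v + d) * int k) n"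
    using modn_add[OF n_pos] by (simp add: algebra_simps)
  also have "\<dots> = P ! ((pos v + d) mod n)"
    using nth_P[of "(pos v + d) mod n"] modn_add_mod[OF n_pos] n_pos by simp
  finally show ?thesis using pos_nth_P n_pos by simp
qed

definition m :: nat where
  "m = pos (modn (int (P ! 0) + 1) n)"

lemma m_less: "m < n"
  unfolding m_def using pos_less_and_nth[OF modn_mem[OF n_pos]] by blast

lemma modn_add_m_mult_k: "modn (x + int m * int k) n = modn (x + 1) n"
proof -
  have "modn (int (P ! 0) + int m * int k) n = modn (int (P ! 0) + 1) n"
    using nth_P[OF m_less] pos_less_and_nth[OF modn_mem[OF n_pos]] unfolding m_def by simp
  then have "int n dvd (int (P ! 0) + int m * int k) - (int (P ! 0) + 1)"
    using modn_eq_iff[OF n_pos] mod_eq_dvd_iff by blast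
  then have "int n dvd (x + int m * int k) - (x + 1)" by simp
  then show ?thesis using modn_eq_iff[OF n_pos] mod_eq_dvd_iff by blast
qed

lemma pos_succ: "v \<in> {1..n} \<Longrightarrow> pos (modn (int v + 1) n) = (pos v + m) mod n"
  using pos_modn_add_mult_k[of v m] modn_add_m_mult_k[of "int v"] by simp

end

lemma add_mod_eq_pred:
  fixes a b n :: nat
  assumes "a < n" "b < n" "(a + b) mod n = n - 1"
  shows "a + b = n - 1"
  using assms by (auto simp: mod_if split: if_splits)

context arith_prog
begin

lemma cut_after_eq: "cut_after P v = Suc (pos v)"
  unfolding cut_after_def pos_def using length_P by simp

definition cut1 :: nat where
  "cut1 = cut_after P (n - k)"

definition cut2 :: nat where
  "cut2 = cut_after P (modn (int (P ! 0) - int k - 1) n)"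

lemma n_minus_k_mem: "n - k \<in> {1..n}"
  using k_pos k_less by auto

lemma cut1_le: "cut1 \<le> n"
  using pos_less_and_nth[OF n_minus_k_mem] unfolding cut1_def cut_after_eq by simp

lemma pos_n: "pos n = cut1 mod n"
proof -
  have "modn (int (n - k) + int 1 * int k) n = n"
    using k_less n_pos modn_of_mem[of n n] by (simp add: of_nat_diff)
  then show ?thesis
    using pos_modn_add_mult_k[OF n_minus_k_mem, of 1] unfolding cut1_def cut_after_eq by simp
qed

lemma cut2_eq: "cut2 = n - m"
proof -
  define u where "u = modn (int (P ! 0) - int k - 1) n"
  define w where "w = modn (int u + 1) n"
  have u: "u \<in> {1..n}" and w: "w \<in> {1..n}"
    unfolding u_def w_def using modn_mem[OF n_pos] by auto
  have "modn (int w + int 1 * int k) n = modn (int (P ! 0)) n"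
    unfolding w_def u_def using modn_add[OF n_pos] by simp
  also have "\<dots> = P ! 0"
    using nth_P_mem[of 0] n_pos by (simp add: modn_of_mem)
  finally have "(pos w + 1) mod n = 0"
    using pos_modn_add_mult_k[OF w, of 1] pos_nth_P[of 0] n_pos by simp
  then have "pos w = n - 1"
    using pos_less_and_nth[OF w] by (auto simp: mod_if split: if_splits)
  then have "(pos u + m) mod n = n - 1"
    using pos_succ[OF u] unfolding w_def by simp
  then have "pos u + m = n - 1"
    using add_mod_eq_pred pos_less_and_nth[OF u] m_less by blast
  then show ?thesis
    unfolding cut2_def cut_after_eq u_def[symmetric] using n_pos by linarith
qed

definition lo :: nat where
  "lo = min cut1 cut2"

definition hi :: nat where
  "hi = max cut1 cut2"

definition letter :: "nat \<Rightarrow> tern" where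
  "letter i = (if i < lo then TA else if i < hi then TB else TC)"

lemma cuts_mem: "cut1 \<in> {lo, hi}" "cut2 \<in> {lo, hi}"
  unfolding lo_def hi_def by (auto simp: min_def max_def)

lemma letter_differs_across_cut:
  "c \<in> {lo, hi} \<Longrightarrow> i < c \<Longrightarrow> c \<le> j \<Longrightarrow> letter i \<noteq> letter j"
  unfolding letter_def lo_def hi_def by auto

lemma ternary_string_eq:
  "ternary_string n k P = map (\<lambda>v. if v \<in> set (take lo P) then TA
      else if v \<in> set (drop lo (take hi P)) then TB else TC) [1..<n + 1]"
  by (simp add: ternary_string_def Let_def lo_def hi_def cut1_def cut2_def)

lemma nth_ternary_string:
  assumes v: "v \<in> {1..n}"
  shows "ternary_string n k P ! (v - 1) = letter (pos v)"
proof -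
  have "[1..<n + 1] ! (v - 1) = v"
    using v by (subst nth_upt) auto
  moreover have "v - 1 < length [1..<n + 1]"
    using v by auto
  ultimately
  have "ternary_string n k P ! (v - 1) =
      (if v \<in> set (take lo P) then TA
       else if v \<in> set (drop lo (take hi P)) then TB else TC)"
    by (simp only: ternary_string_eq nth_map)
  then show ?thesis
    using nth_mem_drop_take_iff[OF distinct_P, of "pos v"]
      nth_mem_drop_take_iff[OF distinct_P, of "pos v" 0, unfolded drop_0] pos_less_and_nth[OF v] length_P
    by (simp add: letter_def)
qed

lemma rank_shift_ternary_string: "rank_shift (ternary_string n k P) n m pos letter"
proof
  show "length (ternary_string n k P) = n"
    by (simp add: ternary_string_eq)
  show "mono letter"
    by (auto simp: mono_def letter_def less_eq_tern_def)
  show "\<And>i j. i < j \<Longrightarrow> j < n \<Longrightarrow> letter i = letter j \<Longrightarrow> \<not> (i < n - m \<and> n - m \<le> j)"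
    using letter_differs_across_cut cuts_mem(2) unfolding cut2_eq by blast
  show "\<And>i. i < pos n \<Longrightarrow> letter i \<noteq> letter (pos n)"
    using letter_differs_across_cut[OF cuts_mem(1)] pos_n cut1_le
    by (cases "cut1 < n") auto
qed (use m_less pos_less_and_nth inj_pos nth_ternary_string pos_succ in auto)

end

theorem theorem4:
  fixes n k :: nat and P SA :: "nat list"
  assumes "n \<ge> 2"
    and "arith_prog_perm n k P"
    and "P \<noteq> rev [1..<n + 1]"
    and "is_suffix_array (ternary_string n k P) SA"
  shows "bwt_matrix (ternary_string n k P) = bwt_sa (ternary_string n k P) SA"
proof -
  interpret arith_prog n k P
    by unfold_locales (rule assms(2))
  show ?thesis
    using bwt_matrix_eq_bwt_sa_if_sorted[OF assms(4)]
      rank_shift.sorted_rotations_suffix_array[OF rank_shift_ternary_string assms(4)] .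
qed

end
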